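(* Let $\mathcal{C}$ be the complete computational structure of a linear system $G$ with generalized state-space realization $\dot{x}=Ax+\hat{A}w+Bu$, $w=\bar{A}x+\tilde{A}w+\bar{B}u$, $y=Cx+\bar{C}w+Du$ ($I-\tilde{A}$ invertible), and suppose its minimal intricacy realization $(A_o,B_o,C_o,D_o)$ has $C_o=\begin{bmatrix}C_{11}&C_{12}\\C_{21}&C_{22}\end{bmatrix}$ with $C_{11}$ invertible. Then $\mathcal{C}$ specifies a unique subsystem structure, a unique signal structure, and a unique sparsity structure.
   Context: Inputs $u\in\mathbb{R}^m$, states $x\in\mathbb{R}^n$, auxiliary variables $w\in\mathbb{R}^l$, outputs $y\in\mathbb{R}^p$. Complete computational structure $\mathcal{C}$: directed graph with one vertex per input, state, auxiliary variable and output; an edge from vertex $a$ to vertex $b$ (labelled by the variable produced at $a$) whenever the equation defining the variable at $b$ depends on the variable at $a$ (nonzero coefficient). Inputs and outputs are manifest; states are hidden; auxiliary variables are hidden unless passed directly out as outputs. A partition of $V(\mathcal{C})$ is admissible if every edge between distinct components represents a manifest variable. The subsystem structure is the condensation graph of $\mathcal{C}$ with respect to an admissible partition of maximal cardinality (vertices = components, labelled by their transfer functions; edge $(S_i,S_j)$ if some edge of $\mathcal{C}$ goes from $S_i$ to $S_j$). Minimal intricacy realization: $A_o=A+\hat{A}(I-\tilde{A})^{-1}\bar{A}$, $B_o=B+\hat{A}(I-\tilde{A})^{-1}\bar{B}$, $C_o=C+\bar{C}(I-\tilde{A})^{-1}\bar{A}$, $D_o=D+\bar{C}(I-\tilde{A})^{-1}\bar{B}$.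 Signal structure: let $p_1=\operatorname{rank}C_o$, with outputs/states ordered so that $C_{11}\in\mathbb{R}^{p_1\times p_1}$ is invertible. Let $\begin{bmatrix}N_1\\N_2\end{bmatrix}$ ($N_2\in\mathbb{R}^{(n-p_1)\times(n-p_1)}$) have columns forming a basis of $\ker C_o$ (then $N_2$ is invertible), and $T=\begin{bmatrix}C_{11}&C_{12}\\0&N_2^{-1}\end{bmatrix}$. In coordinates $z=Tx$ the system reads $\dot{z}_1=A_{11}z_1+A_{12}z_2+B_1u$, $\dot{z}_2=A_{21}z_1+A_{22}z_2+B_2u$, $y_1=z_1+D_1u$, $y_2=C_2z_1+D_2u$, with $C_2=C_{21}C_{11}^{-1}$. Put $W(s)=A_{11}+A_{12}(sI-A_{22})^{-1}A_{21}$, $V(s)=B_1+A_{12}(sI-A_{22})^{-1}B_2$, $\hat{D}(s)$ the diagonal part of $W(s)$, $Q(s)=(sI-\hat{D})^{-1}(W-\hat{D})$, $P(s)=(sI-\hat{D})^{-1}V$; $(Q,P)$ is the dynamical structure function and $Y_1=QY_1+(P+(I-Q)D_1)U$, $Y_2=C_2Y_1+D_2U$. The signal structure is the directed graph with vertices $u_1,\dots,u_m,y_{11},\dots,y_{1p_1},y_{21},\dots,y_{2(p-p_1)}$ and an edge $u_i\to y_{1j}$, $u_i\to y_{2j}$, $y_{1i}\to y_{1j}$, $y_{1i}\to y_{2j}$ whenever the corresponding entry of $P+(I-Q)D_1$, $D_2$, $Q$, $C_2$ respectively is nonzero, labelled by that entry. Sparsity structure: bipartite directed graph with vertices $u_1,\dots,u_m,y_1,\dots,y_p$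 and an edge $u_i\to y_j$ (labelled $G_{ji}$) whenever the $(j,i)$ entry of the transfer function $G(s)=C_o(sI-A_o)^{-1}B_o+D_o$ is nonzero. *)

theory Defs
  imports "Jordan_Normal_Form.DL_Rank" "Jordan_Normal_Form.Gauss_Jordan_Elimination" "Jordan_Normal_Form.Matrix_Kernel"
begin

text \<open>xdot = A x + Ah w + B u,  w = Ab x + At w + Bb u,  y = C x + Cb w + D u,
  with n states, m inputs, l auxiliary variables, p outputs.\<close>

record gss =
  gA  :: "real mat"
  gAh :: "real mat"
  gB  :: "real mat"
  gAb :: "real mat"
  gAt :: "real mat"
  gBb :: "real mat"
  gC  :: "real mat"
  gCb :: "real mat"
  gD  :: "real mat"

definition gss_wf :: "gss \<Rightarrow> nat \<Rightarrow> nat \<Rightarrow> nat \<Rightarrow> nat \<Rightarrow> bool" where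
  "gss_wf S n m l p \<longleftrightarrow>
     gA S \<in> carrier_mat n n \<and> gAh S \<in> carrier_mat n l \<and> gB S \<in> carrier_mat n m \<and>
     gAb S \<in> carrier_mat l n \<and> gAt S \<in> carrier_mat l l \<and> gBb S \<in> carrier_mat l m \<and>
     gC S \<in> carrier_mat p n \<and> gCb S \<in> carrier_mat p l \<and> gD S \<in> carrier_mat p m"

text \<open>Matrix inverse (meaningful for invertible square matrices).\<close>
definition minv :: "'a::field mat \<Rightarrow> 'a mat" where
  "minv M = the (mat_inverse M)"

definition sub_mat :: "'a mat \<Rightarrow> nat \<Rightarrow> nat \<Rightarrow> nat \<Rightarrow> nat \<Rightarrow> 'a mat" where
  "sub_mat M r0 c0 r c = mat r c (\<lambda>(i,j). M $$ (i + r0, j + c0))"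

definition cmat :: "real mat \<Rightarrow> complex mat" where
  "cmat M = map_mat complex_of_real M"

definition gss_Ao :: "gss \<Rightarrow> real mat" where
  "gss_Ao S = gA S + gAh S * minv (1\<^sub>m (dim_row (gAt S)) - gAt S) * gAb S"
definition gss_Bo :: "gss \<Rightarrow> real mat" where
  "gss_Bo S = gB S + gAh S * minv (1\<^sub>m (dim_row (gAt S)) - gAt S) * gBb S"
definition gss_Co :: "gss \<Rightarrow> real mat" where
  "gss_Co S = gC S + gCb S * minv (1\<^sub>m (dim_row (gAt S)) - gAt S) * gAb S"
definition gss_Do :: "gss \<Rightarrow> real mat" where
  "gss_Do S = gD S + gCb S * minv (1\<^sub>m (dim_row (gAt S)) - gAt S) * gBb S"

text \<open>Entries of transfer matrices are rational functions in s; we represent them by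
  their values at complex s. A rational function is nonzero iff it is nonzero at
  infinitely many points, and two are equal iff they agree outside a finite set.\<close>
definition tf_nonzero :: "(complex \<Rightarrow> complex) \<Rightarrow> bool" where
  "tf_nonzero f \<longleftrightarrow> infinite {s. f s \<noteq> 0}"
definition tf_eq :: "(complex \<Rightarrow> complex) \<Rightarrow> (complex \<Rightarrow> complex) \<Rightarrow> bool" where
  "tf_eq f g \<longleftrightarrow> finite {s. f s \<noteq> g s}"

datatype cvertex = VU nat | VX nat | VW nat | VY nat

definition cs_vertices :: "nat \<Rightarrow> nat \<Rightarrow> nat \<Rightarrow> nat \<Rightarrow> cvertex set" where
  "cs_vertices n m l p = VU ` {..<m} \<union> VX ` {..<n} \<union> VW ` {..<l} \<union> VY ` {..<p}"

text \<open>Edge a -> b iff the equation defining the variable at b depends on the variable at a.\<close>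
fun cs_edge :: "gss \<Rightarrow> nat \<Rightarrow> nat \<Rightarrow> nat \<Rightarrow> nat \<Rightarrow> cvertex \<Rightarrow> cvertex \<Rightarrow> bool" where
  "cs_edge S n m l p (VU i) (VX j) = (i < m \<and> j < n \<and> gB S $$ (j,i) \<noteq> 0)"
| "cs_edge S n m l p (VU i) (VW j) = (i < m \<and> j < l \<and> gBb S $$ (j,i) \<noteq> 0)"
| "cs_edge S n m l p (VU i) (VY j) = (i < m \<and> j < p \<and> gD S $$ (j,i) \<noteq> 0)"
| "cs_edge S n m l p (VX i) (VX j) = (i < n \<and> j < n \<and> gA S $$ (j,i) \<noteq> 0)"
| "cs_edge S n m l p (VX i) (VW j) = (i < n \<and> j < l \<and> gAb S $$ (j,i) \<noteq> 0)"
| "cs_edge S n m l p (VX i) (VY j) = (i < n \<and> j < p \<and> gC S $$ (j,i) \<noteq> 0)"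
| "cs_edge S n m l p (VW i) (VX j) = (i < l \<and> j < n \<and> gAh S $$ (j,i) \<noteq> 0)"
| "cs_edge S n m l p (VW i) (VW j) = (i < l \<and> j < l \<and> gAt S $$ (j,i) \<noteq> 0)"
| "cs_edge S n m l p (VW i) (VY j) = (i < l \<and> j < p \<and> gCb S $$ (j,i) \<noteq> 0)"
| "cs_edge S n m l p _ _ = False"

definition aux_output :: "gss \<Rightarrow> nat \<Rightarrow> nat \<Rightarrow> nat \<Rightarrow> nat \<Rightarrow> nat \<Rightarrow> bool" where
  "aux_output S n m l p k \<longleftrightarrow> (\<exists>j<p. (\<forall>i<n. gC S $$ (j,i) = 0) \<and> (\<forall>i<m. gD S $$ (j,i) = 0)
       \<and> (\<forall>i<l. gCb S $$ (j,i) = (if i = k then 1 else 0)))"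

fun manifest :: "gss \<Rightarrow> nat \<Rightarrow> nat \<Rightarrow> nat \<Rightarrow> nat \<Rightarrow> cvertex \<Rightarrow> bool" where
  "manifest S n m l p (VU i) = True"
| "manifest S n m l p (VY i) = True"
| "manifest S n m l p (VX i) = False"
| "manifest S n m l p (VW k) = aux_output S n m l p k"

definition is_partition :: "'a set \<Rightarrow> 'a set set \<Rightarrow> bool" where
  "is_partition V P \<longleftrightarrow> (\<forall>B\<in>P. B \<noteq> {} \<and> B \<subseteq> V) \<and> \<Union>P = V \<and>
     (\<forall>B1\<in>P. \<forall>B2\<in>P. B1 \<noteq> B2 \<longrightarrow> B1 \<inter> B2 = {})"

definition admissible_partition :: "gss \<Rightarrow> nat \<Rightarrow> nat \<Rightarrow> nat \<Rightarrow> nat \<Rightarrow> cvertex set set \<Rightarrow> bool" where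
  "admissible_partition S n m l p P \<longleftrightarrow> is_partition (cs_vertices n m l p) P \<and>
     (\<forall>a b. cs_edge S n m l p a b \<longrightarrow> \<not> (\<exists>B\<in>P. a \<in> B \<and> b \<in> B) \<longrightarrow> manifest S n m l p a)"

definition max_admissible_partition :: "gss \<Rightarrow> nat \<Rightarrow> nat \<Rightarrow> nat \<Rightarrow> nat \<Rightarrow> cvertex set set \<Rightarrow> bool" where
  "max_admissible_partition S n m l p P \<longleftrightarrow> admissible_partition S n m l p P \<and>
     (\<forall>P'. admissible_partition S n m l p P' \<longrightarrow> card P' \<le> card P)"

definition is_subsystem_structure ::
  "gss \<Rightarrow> nat \<Rightarrow> nat \<Rightarrow> nat \<Rightarrow> nat \<Rightarrow> cvertex set set \<times> (cvertex set \<times> cvertex set) set \<Rightarrow> bool" where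
  "is_subsystem_structure S n m l p G \<longleftrightarrow> (\<exists>P. max_admissible_partition S n m l p P \<and>
     G = (P, {(B1, B2). B1 \<in> P \<and> B2 \<in> P \<and> (\<exists>a\<in>B1. \<exists>b\<in>B2. cs_edge S n m l p a b)}))"

definition gss_p1 :: "gss \<Rightarrow> nat" where
  "gss_p1 S = vec_space.rank (dim_row (gss_Co S)) (gss_Co S)"

definition gss_C11 :: "gss \<Rightarrow> real mat" where
  "gss_C11 S = sub_mat (gss_Co S) 0 0 (gss_p1 S) (gss_p1 S)"

definition kernel_basis :: "gss \<Rightarrow> nat \<Rightarrow> real mat \<Rightarrow> bool" where
  "kernel_basis S n N \<longleftrightarrow> N \<in> carrier_mat n (n - gss_p1 S) \<and>
     mat_kernel (gss_Co S) = {N *\<^sub>v c | c. c \<in> carrier_vec (n - gss_p1 S)} \<and>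
     (\<forall>c \<in> carrier_vec (n - gss_p1 S). N *\<^sub>v c = 0\<^sub>v n \<longrightarrow> c = 0\<^sub>v (n - gss_p1 S))"

datatype svertex = SU nat | SY1 nat | SY2 nat

definition dsf_data :: "gss \<Rightarrow> nat \<Rightarrow> nat \<Rightarrow> nat \<Rightarrow> real mat \<Rightarrow>
    (complex \<Rightarrow> complex mat) \<times> (complex \<Rightarrow> complex mat) \<times> real mat \<times> real mat" where
  "dsf_data S n m p N = (let
     p1 = gss_p1 S; k = n - p1;
     Co = gss_Co S; Ao = gss_Ao S; Bo = gss_Bo S; Do = gss_Do S;
     C11 = sub_mat Co 0 0 p1 p1; C12 = sub_mat Co 0 p1 p1 k; C21 = sub_mat Co p1 0 (p - p1) p1;
     N2 = sub_mat N p1 0 k k;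
     T = four_block_mat C11 C12 (0\<^sub>m k p1) (minv N2);
     Az = T * Ao * minv T; Bz = T * Bo;
     A11 = sub_mat Az 0 0 p1 p1; A12 = sub_mat Az 0 p1 p1 k;
     A21 = sub_mat Az p1 0 k p1; A22 = sub_mat Az p1 p1 k k;
     B1 = sub_mat Bz 0 0 p1 m; B2 = sub_mat Bz p1 0 k m;
     D1 = sub_mat Do 0 0 p1 m; D2 = sub_mat Do p1 0 (p - p1) m;
     C2 = C21 * minv C11;
     W = (\<lambda>s. cmat A11 + cmat A12 * minv (s \<cdot>\<^sub>m 1\<^sub>m k - cmat A22) * cmat A21);
     V = (\<lambda>s. cmat B1 + cmat A12 * minv (s \<cdot>\<^sub>m 1\<^sub>m k - cmat A22) * cmat B2);
     Dh = (\<lambda>s. mat p1 p1 (\<lambda>(i,j). if i = j then W s $$ (i,j) else 0));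
     Q = (\<lambda>s. minv (s \<cdot>\<^sub>m 1\<^sub>m p1 - Dh s) * (W s - Dh s));
     P = (\<lambda>s. minv (s \<cdot>\<^sub>m 1\<^sub>m p1 - Dh s) * V s);
     PD = (\<lambda>s. P s + (1\<^sub>m p1 - Q s) * cmat D1)
   in (Q, PD, C2, D2))"

fun sig_label :: "gss \<Rightarrow> nat \<Rightarrow> nat \<Rightarrow> nat \<Rightarrow> real mat \<Rightarrow> svertex \<Rightarrow> svertex \<Rightarrow> complex \<Rightarrow> complex" where
  "sig_label S n m p N (SU i) (SY1 j) = (\<lambda>s. if i < m \<and> j < gss_p1 S
        then (fst (snd (dsf_data S n m p N))) s $$ (j,i) else 0)"
| "sig_label S n m p N (SU i) (SY2 j) = (\<lambda>s. if i < m \<and> j < p - gss_p1 S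
        then complex_of_real (snd (snd (snd (dsf_data S n m p N))) $$ (j,i)) else 0)"
| "sig_label S n m p N (SY1 i) (SY1 j) = (\<lambda>s. if i < gss_p1 S \<and> j < gss_p1 S
        then (fst (dsf_data S n m p N)) s $$ (j,i) else 0)"
| "sig_label S n m p N (SY1 i) (SY2 j) = (\<lambda>s. if i < gss_p1 S \<and> j < p - gss_p1 S
        then complex_of_real (fst (snd (snd (dsf_data S n m p N))) $$ (j,i)) else 0)"
| "sig_label S n m p N _ _ = (\<lambda>s. 0)"

type_synonym 'v lgraph = "('v \<times> 'v) set \<times> ('v \<Rightarrow> 'v \<Rightarrow> complex \<Rightarrow> complex)"

definition labelled_graph :: "('v \<Rightarrow> 'v \<Rightarrow> complex \<Rightarrow> complex) \<Rightarrow> 'v lgraph" where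
  "labelled_graph L = ({(a, b). tf_nonzero (L a b)}, L)"

definition is_signal_structure :: "gss \<Rightarrow> nat \<Rightarrow> nat \<Rightarrow> nat \<Rightarrow> svertex lgraph \<Rightarrow> bool" where
  "is_signal_structure S n m p G \<longleftrightarrow>
     (\<exists>N. kernel_basis S n N \<and> G = labelled_graph (sig_label S n m p N))"

definition lgraph_eq :: "'v lgraph \<Rightarrow> 'v lgraph \<Rightarrow> bool" where
  "lgraph_eq G1 G2 \<longleftrightarrow> fst G1 = fst G2 \<and> (\<forall>a b. tf_eq (snd G1 a b) (snd G2 a b))"

datatype pvertex = PU nat | PY nat

definition transfer_fn :: "gss \<Rightarrow> nat \<Rightarrow> complex \<Rightarrow> complex mat" where
  "transfer_fn S n s = cmat (gss_Co S) * minv (s \<cdot>\<^sub>m 1\<^sub>m n - cmat (gss_Ao S)) * cmat (gss_Bo S)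
      + cmat (gss_Do S)"

fun sparse_label :: "gss \<Rightarrow> nat \<Rightarrow> nat \<Rightarrow> nat \<Rightarrow> pvertex \<Rightarrow> pvertex \<Rightarrow> complex \<Rightarrow> complex" where
  "sparse_label S n m p (PU i) (PY j) = (\<lambda>s. if i < m \<and> j < p then transfer_fn S n s $$ (j,i) else 0)"
| "sparse_label S n m p _ _ = (\<lambda>s. 0)"

definition is_sparsity_structure :: "gss \<Rightarrow> nat \<Rightarrow> nat \<Rightarrow> nat \<Rightarrow> pvertex lgraph \<Rightarrow> bool" where
  "is_sparsity_structure S n m p G \<longleftrightarrow> G = labelled_graph (sparse_label S n m p)"

end

theory Submission
  imports Defs "Jordan_Normal_Form.Char_Poly" "Jordan_Normal_Form.DL_Rank_Submatrix"
begin

text \<open>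
  An admissible partition must keep both ends of every edge leaving a hidden vertex inside one
  block, so its blocks are unions of classes of the equivalence relation generated by these edges.
  The partition into these classes is itself admissible, hence it is the only admissible partition
  of maximal cardinality. The sparsity structure is read off the transfer function of the minimal
  intricacy realization and involves no choice.

  The signal structure depends on the kernel basis \<open>N\<close> of \<open>C\<^sub>o\<close> only through its lower block
  \<open>N\<^sub>2\<close>. A kernel basis exists: since \<open>rank C\<^sub>o = p\<^sub>1\<close> and \<open>C\<^sub>1\<^sub>1\<close> is nonsingular, the columns of
  \<open>[-C\<^sub>1\<^sub>1\<^sup>-\<^sup>1 C\<^sub>1\<^sub>2; I]\<close> span the kernel, because a lower row of \<open>C\<^sub>o\<close> not vanishing on them would
  produce a nonzero minor of order \<open>p\<^sub>1 + 1\<close>. Two kernel bases give transformations with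
  \<open>T' = diag(I, R\<^sup>-\<^sup>1) T\<close> for an invertible \<open>R\<close>: \<open>z\<^sub>1\<close> is unchanged and \<open>z\<^sub>2\<close> is replaced by
  \<open>R\<^sup>-\<^sup>1 z\<^sub>2\<close>. This similarity of the \<open>z\<^sub>2\<close>-block leaves \<open>W(s)\<close> and \<open>V(s)\<close> unchanged wherever
  \<open>sI - A\<^sub>2\<^sub>2\<close> is invertible, i.e. outside the finitely many eigenvalues of \<open>A\<^sub>2\<^sub>2\<close>; so the two
  signal structures have the same edges, and their labels agree as rational functions.
\<close>

section \<open>Partitions generated by hidden edges\<close>

lemma equiv_Restr_equiv_closure: "equiv V (Restr ((H \<union> H\<inverse>)\<^sup>*) V)"
proof -
  have "sym ((H \<union> H\<inverse>)\<^sup>*)"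
    by (metis converse_Un converse_converse sup_commute sym_conv_converse_eq rtrancl_converse)
  then show ?thesis
    unfolding equiv_def refl_on_def sym_def trans_def by (auto intro: rtrancl_trans)
qed

lemma is_partition_quotient: "equiv V r \<Longrightarrow> is_partition V (V // r)"
  unfolding is_partition_def
  by (auto simp: Union_quotient dest: in_quotient_imp_non_empty in_quotient_imp_subset quotient_disj)

lemma is_partition_block_eq: "is_partition V P \<Longrightarrow> B \<in> P \<Longrightarrow> B' \<in> P \<Longrightarrow> x \<in> B \<Longrightarrow> x \<in> B' \<Longrightarrow> B = B'"
  unfolding is_partition_def by blast

lemma equiv_closure_stays_in_block:
  assumes P: "is_partition V P" and H: "\<forall>(a, b)\<in>H. \<exists>B\<in>P. a \<in> B \<and> b \<in> B"
    and B: "B \<in> P" "x \<in> B" and xy: "(x, y) \<in> (H \<union> H\<inverse>)\<^sup>*"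
  shows "y \<in> B"
  using xy
proof (induction rule: rtrancl_induct)
  case (step y z)
  then obtain B' where B': "B' \<in> P" "y \<in> B'" "z \<in> B'"
    using H by blast
  then show ?case
    using is_partition_block_eq[OF P B(1) B'(1) step.IH B'(2)] by simp
qed (use B in simp)

lemma quotient_equiv_closure_respects:
  assumes "H \<subseteq> V \<times> V"
  shows "\<forall>(a, b)\<in>H. \<exists>B\<in>V // Restr ((H \<union> H\<inverse>)\<^sup>*) V. a \<in> B \<and> b \<in> B"
proof (intro ballI, clarify)
  fix a b assume ab: "(a, b) \<in> H"
  let ?r = "Restr ((H \<union> H\<inverse>)\<^sup>*) V"
  have a: "a \<in> V" and b: "b \<in> V"
    using ab assms by auto
  show "\<exists>B\<in>V // ?r. a \<in> B \<and> b \<in> B"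
  proof (intro bexI conjI)
    show "?r `` {a} \<in> V // ?r" using a by (rule quotientI)
    show "a \<in> ?r `` {a}" using a by simp
    show "b \<in> ?r `` {a}" using a b ab by (simp add: r_into_rtrancl)
  qed
qed

lemma quotient_equiv_closure_selector:
  assumes P: "is_partition V P" and H: "\<forall>(a, b)\<in>H. \<exists>B\<in>P. a \<in> B \<and> b \<in> B"
  obtains g where "inj_on g P" "\<And>B. B \<in> P \<Longrightarrow> g B \<in> V // Restr ((H \<union> H\<inverse>)\<^sup>*) V"
    "\<And>B. B \<in> P \<Longrightarrow> g B \<subseteq> B"
proof -
  let ?r = "Restr ((H \<union> H\<inverse>)\<^sup>*) V"
  have block: "B \<subseteq> V" "B \<noteq> {}" if "B \<in> P" for B
    using P that unfolding is_partition_def by auto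
  define g where "g B = ?r `` {SOME x. x \<in> B}" for B
  have rep: "(SOME x. x \<in> B) \<in> B" if "B \<in> P" for B
    using block(2)[OF that] by (auto intro: someI_ex)
  have g_Q: "g B \<in> V // ?r" and g_sub: "g B \<subseteq> B" and g_rep: "(SOME x. x \<in> B) \<in> g B" if "B \<in> P" for B
    using rep[OF that] block(1)[OF that] equiv_closure_stays_in_block[OF P H that rep[OF that]]
    unfolding g_def by (auto intro: quotientI)
  have "inj_on g P"
  proof (rule inj_onI)
    fix B B' assume B: "B \<in> P" "B' \<in> P" "g B = g B'"
    then have "(SOME x. x \<in> B) \<in> B'"
      using g_rep g_sub by blast
    then show "B = B'"
      by (rule is_partition_block_eq[OF P B(1,2) rep[OF B(1)]])
  qed
  then show ?thesis
    using that g_Q g_sub by blast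
qed

lemma quotient_equiv_closure_max_partition:
  assumes V: "finite V" and P: "is_partition V P" and H: "\<forall>(a, b)\<in>H. \<exists>B\<in>P. a \<in> B \<and> b \<in> B"
  defines "Q \<equiv> V // Restr ((H \<union> H\<inverse>)\<^sup>*) V"
  shows "card P \<le> card Q" and "card Q \<le> card P \<Longrightarrow> P = Q"
proof -
  obtain g where inj: "inj_on g P" and g_Q: "\<And>B. B \<in> P \<Longrightarrow> g B \<in> Q" and g_sub: "\<And>B. B \<in> P \<Longrightarrow> g B \<subseteq> B"
    using quotient_equiv_closure_selector[OF P H] unfolding Q_def by blast
  have finQ: "finite Q"
    unfolding Q_def using V by (rule finite_quotient) blast
  show card_le: "card P \<le> card Q"
    using card_inj_on_le[OF inj _ finQ] g_Q by blast
  assume "card Q \<le> card P"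
  then have gP: "g ` P = Q"
    using card_image[OF inj] card_le g_Q finQ by (intro card_subset_eq) auto
  have "g B = B" if B: "B \<in> P" for B
  proof (rule subset_antisym[OF g_sub[OF B]])
    show "B \<subseteq> g B"
  proof
    fix y assume y: "y \<in> B"
    have yV: "y \<in> V"
      using P B y unfolding is_partition_def by blast
    then have "Restr ((H \<union> H\<inverse>)\<^sup>*) V `` {y} \<in> Q"
      unfolding Q_def by (rule quotientI)
    then obtain B' where B': "B' \<in> P" "g B' = Restr ((H \<union> H\<inverse>)\<^sup>*) V `` {y}"
      using gP by blast
    then have "y \<in> g B'"
      using yV by simp
    moreover have "B' = B"
      using is_partition_block_eq[OF P B'(1) B] g_sub[OF B'(1)] \<open>y \<in> g B'\<close> y by blast
    ultimately show "y \<in> g B" by simp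
  qed
  qed
  then have "g ` P = P"
    by simp
  then show "P = Q"
    using gP by simp
qed

definition hidden_edges :: "gss \<Rightarrow> nat \<Rightarrow> nat \<Rightarrow> nat \<Rightarrow> nat \<Rightarrow> (cvertex \<times> cvertex) set" where
  "hidden_edges S n m l p = {(a, b). cs_edge S n m l p a b \<and> \<not> manifest S n m l p a}"

lemma cs_edge_in_vertices:
  "cs_edge S n m l p a b \<Longrightarrow> a \<in> cs_vertices n m l p \<and> b \<in> cs_vertices n m l p"
  by (cases a; cases b) (auto simp: cs_vertices_def)

lemma hidden_edges_subset: "hidden_edges S n m l p \<subseteq> cs_vertices n m l p \<times> cs_vertices n m l p"
  unfolding hidden_edges_def using cs_edge_in_vertices by blast

lemma admissible_partition_iff:
  "admissible_partition S n m l p P \<longleftrightarrow> is_partition (cs_vertices n m l p) P \<and>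
     (\<forall>(a, b)\<in>hidden_edges S n m l p. \<exists>B\<in>P. a \<in> B \<and> b \<in> B)"
  unfolding admissible_partition_def hidden_edges_def by fastforce

lemma max_admissible_partition_iff:
  "max_admissible_partition S n m l p P \<longleftrightarrow>
     P = cs_vertices n m l p // Restr ((hidden_edges S n m l p \<union> (hidden_edges S n m l p)\<inverse>)\<^sup>*) (cs_vertices n m l p)"
  (is "_ \<longleftrightarrow> P = ?Q")
proof -
  have fin: "finite (cs_vertices n m l p)"
    by (simp add: cs_vertices_def)
  have Q: "admissible_partition S n m l p ?Q"
    unfolding admissible_partition_iff
  proof
    show "is_partition (cs_vertices n m l p) ?Q"
      by (rule is_partition_quotient[OF equiv_Restr_equiv_closure])
    show "\<forall>(a, b)\<in>hidden_edges S n m l p. \<exists>B\<in>?Q. a \<in> B \<and> b \<in> B"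
      by (rule quotient_equiv_closure_respects[OF hidden_edges_subset])
  qed
  note bounds = quotient_equiv_closure_max_partition[OF fin, where H = "hidden_edges S n m l p"]
  show ?thesis
  proof
    assume "max_admissible_partition S n m l p P"
    then have "admissible_partition S n m l p P" "card ?Q \<le> card P"
      using Q unfolding max_admissible_partition_def by blast+
    then show "P = ?Q"
      using bounds(2) unfolding admissible_partition_iff by blast
  next
    assume "P = ?Q"
    then show "max_admissible_partition S n m l p P"
      using Q bounds(1) unfolding max_admissible_partition_def admissible_partition_iff by blast
  qed
qed

lemma subsystem_structure_unique: "\<exists>!G. is_subsystem_structure S n m l p G"
  unfolding is_subsystem_structure_def max_admissible_partition_iff by simp

lemma sub_mat_carrier[simp]: "sub_mat M r0 c0 r c \<in> carrier_mat r c"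
  by (simp add: sub_mat_def)

lemma dim_sub_mat[simp]: "dim_row (sub_mat M r0 c0 r c) = r" "dim_col (sub_mat M r0 c0 r c) = c"
  by (simp_all add: sub_mat_def)

lemma index_sub_mat[simp]: "i < r \<Longrightarrow> j < c \<Longrightarrow> sub_mat M r0 c0 r c $$ (i, j) = M $$ (i + r0, j + c0)"
  by (simp add: sub_mat_def)

lemma sub_mat_four_block_mat:
  assumes "A \<in> carrier_mat q r" "B \<in> carrier_mat q c" "C \<in> carrier_mat k r" "D \<in> carrier_mat k c"
  shows "sub_mat (four_block_mat A B C D) 0 0 q r = A" "sub_mat (four_block_mat A B C D) 0 r q c = B"
    "sub_mat (four_block_mat A B C D) q 0 k r = C" "sub_mat (four_block_mat A B C D) q r k c = D"
  by (rule eq_matI; use assms in auto)+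

lemma four_block_mat_sub_mat:
  assumes "X \<in> carrier_mat (q + k) (r + c)"
  shows "four_block_mat (sub_mat X 0 0 q r) (sub_mat X 0 r q c) (sub_mat X q 0 k r) (sub_mat X q r k c) = X"
  by (rule eq_matI) (use assms in auto)

lemma sum_split_at: "(\<Sum>t\<in>{0..<a + (k :: nat)}. f t) = (\<Sum>t\<in>{0..<a}. f t) + (\<Sum>t\<in>{0..<k}. f (t + a))"
  by (induction k) (auto simp: add.commute add.left_commute)

lemma mult_split_inner:
  assumes X: "X \<in> carrier_mat a (q + k)" and Y: "Y \<in> carrier_mat (q + k) c"
  shows "X * Y = sub_mat X 0 0 a q * sub_mat Y 0 0 q c + sub_mat X 0 q a k * sub_mat Y q 0 k c"
proof (rule eq_matI)
  fix i j assume "i < dim_row (sub_mat X 0 0 a q * sub_mat Y 0 0 q c + sub_mat X 0 q a k * sub_mat Y q 0 k c)"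
    "j < dim_col (sub_mat X 0 0 a q * sub_mat Y 0 0 q c + sub_mat X 0 q a k * sub_mat Y q 0 k c)"
  then have i: "i < a" and j: "j < c" by auto
  have "(X * Y) $$ (i, j) = (\<Sum>t\<in>{0..<q + k}. X $$ (i, t) * Y $$ (t, j))"
    using X Y i j by (simp add: scalar_prod_def)
  also have "\<dots> = (\<Sum>t\<in>{0..<q}. X $$ (i, t) * Y $$ (t, j)) + (\<Sum>t\<in>{0..<k}. X $$ (i, t + q) * Y $$ (t + q, j))"
    by (rule sum_split_at)
  finally show "(X * Y) $$ (i, j) = (sub_mat X 0 0 a q * sub_mat Y 0 0 q c + sub_mat X 0 q a k * sub_mat Y q 0 k c) $$ (i, j)"
    using i j by (simp add: scalar_prod_def)
qed (use X Y in auto)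

lemma vec_last_mult_mat_vec:
  assumes "X \<in> carrier_mat (q + k) c" "v \<in> carrier_vec c"
  shows "vec_last (X *\<^sub>v v) k = sub_mat X q 0 k c *\<^sub>v v"
  by (rule eq_vecI) (use assms in \<open>auto simp: vec_last_def scalar_prod_def add.commute intro!: sum.cong\<close>)

lemma mult_unit_vec_col:
  assumes X: "(X :: 'a :: semiring_1 mat) \<in> carrier_mat a c" and j: "j < c"
  shows "X *\<^sub>v unit_vec c j = col X j"
proof (rule eq_vecI)
  fix i assume "i < dim_vec (col X j)"
  then show "(X *\<^sub>v unit_vec c j) $ i = col X j $ i"
    using X j scalar_prod_right_unit[OF j, of "row X i"] by simp
qed (use X in simp)

lemma zero_mat_mult_vec[simp]: "v \<in> carrier_vec b \<Longrightarrow> 0\<^sub>m a b *\<^sub>v v = 0\<^sub>v a"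
  by (rule eq_vecI) auto

lemma mult_mat_vec_zero[simp]: "A \<in> carrier_mat a b \<Longrightarrow> A *\<^sub>v 0\<^sub>v b = 0\<^sub>v a"
  by (rule eq_vecI) auto

lemma vec_last_zero[simp]: "k \<le> n \<Longrightarrow> vec_last (0\<^sub>v n) k = 0\<^sub>v k"
  by (rule eq_vecI) (auto simp: vec_last_def)

lemma mat_eq_if_mult_vec_eq:
  assumes X: "(X :: 'a :: semiring_1 mat) \<in> carrier_mat a c" and Y: "Y \<in> carrier_mat a c"
    and eq: "\<And>v. v \<in> carrier_vec c \<Longrightarrow> X *\<^sub>v v = Y *\<^sub>v v"
  shows "X = Y"
proof (rule mat_col_eqI)
  fix j assume "j < dim_col Y"
  then show "col X j = col Y j"
    using eq[of "unit_vec c j"] X Y by (simp add: mult_unit_vec_col)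
qed (use X Y in auto)

lemma sub_mat_sub_mat[simp]:
  "i0 + r' \<le> r \<Longrightarrow> j0 + c' \<le> c \<Longrightarrow> sub_mat (sub_mat M r0 c0 r c) i0 j0 r' c' = sub_mat M (i0 + r0) (j0 + c0) r' c'"
  by (rule eq_matI) (auto simp: add.assoc)

lemma invertible_mat_det_nonzero:
  assumes A: "A \<in> carrier_mat n n" and inv: "invertible_mat A"
  shows "det A \<noteq> 0"
proof -
  obtain B where AB: "A * B = 1\<^sub>m n" and BA: "B * A = 1\<^sub>m (dim_row B)"
    using inv A unfolding invertible_mat_def inverts_mat_def by auto
  have "dim_col B = n"
    using AB A by (metis dim_col_mat(1) index_mult_mat(3) index_one_mat(3))
  moreover have "dim_row B = n"
    using BA A by (metis index_mult_mat(3) index_one_mat(3) carrier_matD(2))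
  ultimately have "B \<in> carrier_mat n n" by auto
  then have "det A * det B = 1"
    using det_mult[OF A, of B] AB by simp
  then show ?thesis by auto
qed

lemma minv_inverse:
  assumes A: "(A :: 'a :: field mat) \<in> carrier_mat n n" and det: "det A \<noteq> 0"
  shows "minv A \<in> carrier_mat n n" "A * minv A = 1\<^sub>m n" "minv A * A = 1\<^sub>m n"
proof -
  have "mat_inverse A \<noteq> None"
    using mat_inverse(1)[OF A, of "()"] det_non_zero_imp_unit[OF A det, of "()"] by blast
  then obtain B where "mat_inverse A = Some B" by auto
  then show "minv A \<in> carrier_mat n n" "A * minv A = 1\<^sub>m n" "minv A * A = 1\<^sub>m n"
    using mat_inverse(2)[OF A] unfolding minv_def by auto
qed

lemma det_minv_nonzero:
  assumes A: "(A :: 'a :: field mat) \<in> carrier_mat n n" and det: "det A \<noteq> 0"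
  shows "det (minv A) \<noteq> 0"
  using det_mult[OF minv_inverse(1)[OF A det] A] minv_inverse(3)[OF A det] by auto

lemma minv_eqI:
  assumes A: "(A :: 'a :: field mat) \<in> carrier_mat n n" and B: "B \<in> carrier_mat n n"
    and AB: "A * B = 1\<^sub>m n"
  shows "minv A = B"
proof -
  have "det A * det B = 1"
    using det_mult[OF A B] AB by simp
  then have det: "det A \<noteq> 0" by auto
  note inv = minv_inverse[OF A det]
  have "minv A = minv A * (A * B)"
    using inv(1) AB by simp
  also have "\<dots> = (minv A * A) * B"
    using inv(1) A B by (rule assoc_mult_mat[symmetric])
  finally show ?thesis
    using inv(3) B by simp
qed

lemma minv_mult:
  assumes A: "(A :: 'a :: field mat) \<in> carrier_mat n n" "det A \<noteq> 0"
    and B: "B \<in> carrier_mat n n" "det B \<noteq> 0"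
  shows "minv (A * B) = minv B * minv A"
proof (rule minv_eqI)
  note iA = minv_inverse[OF A] and iB = minv_inverse[OF B]
  have "A * B * (minv B * minv A) = A * (B * (minv B * minv A))"
    using A(1) B(1) iA(1) iB(1) by (intro assoc_mult_mat) auto
  also have "B * (minv B * minv A) = (B * minv B) * minv A"
    using B(1) iA(1) iB(1) by (intro assoc_mult_mat[symmetric]) auto
  finally show "A * B * (minv B * minv A) = 1\<^sub>m n"
    using iA iB A by simp
qed (use A B minv_inverse(1)[OF A] minv_inverse(1)[OF B] in auto)

lemma rank_le_nr:
  assumes A: "(A :: 'a :: field mat) \<in> carrier_mat nr nc"
  shows "vec_space.rank nr A \<le> nr"
proof -
  interpret vec_space "TYPE('a)" nr .
  have "lin_indpt {}"
    by (unfold lin_dep_def) auto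
  then obtain S where S: "maximal S (\<lambda>T. T \<subseteq> set (cols A) \<and> lin_indpt T)"
    using maximal_exists_superset[of "set (cols A)" "\<lambda>T. T \<subseteq> set (cols A) \<and> lin_indpt T" "{}"]
    by auto
  have "S \<subseteq> set (cols A)" "lin_indpt S"
    using S unfolding maximal_def by auto
  moreover have "set (cols A) \<subseteq> carrier_vec nr"
    using A cols_dim by blast
  ultimately have "card S \<le> dim"
    using li_le_dim(2)[OF fin_dim] by auto
  then show ?thesis
    using rank_card_indpt[OF A S] dim_is_n by simp
qed

lemma finite_char_roots:
  assumes M: "(M :: complex mat) \<in> carrier_mat k k"
  shows "finite {s. det (s \<cdot>\<^sub>m 1\<^sub>m k - M) = 0}"
proof -
  have "s \<cdot>\<^sub>m 1\<^sub>m k - M = - char_matrix M s" for s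
    by (rule eq_matI) (use M in \<open>auto simp: char_matrix_def\<close>)
  then have "det (s \<cdot>\<^sub>m 1\<^sub>m k - M) = poly (char_poly M) s" for s
    using char_poly_matrix[OF M] by simp
  moreover have "char_poly M \<noteq> 0"
    using degree_monic_char_poly[OF M] by auto
  ultimately show ?thesis
    using poly_roots_finite by simp
qed

lemma resolvent_similarity:
  fixes M :: "'a :: field mat"
  assumes R: "R \<in> carrier_mat k k" and Ri: "Ri \<in> carrier_mat k k" and RRi: "R * Ri = 1\<^sub>m k"
    and RiR: "Ri * R = 1\<^sub>m k" and M: "M \<in> carrier_mat k k" and det: "det (s \<cdot>\<^sub>m 1\<^sub>m k - M) \<noteq> 0"
    and X: "X \<in> carrier_mat a k" and Y: "Y \<in> carrier_mat k b"
  shows "(X * R) * minv (s \<cdot>\<^sub>m 1\<^sub>m k - Ri * M * R) * (Ri * Y) = X * minv (s \<cdot>\<^sub>m 1\<^sub>m k - M) * Y"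
proof -
  define A where "A = s \<cdot>\<^sub>m 1\<^sub>m k - M"
  have A: "A \<in> carrier_mat k k"
    unfolding A_def using M by (rule minus_carrier_mat)
  define Ai where "Ai = minv A"
  have Ai: "Ai \<in> carrier_mat k k" "A * Ai = 1\<^sub>m k"
    using minv_inverse[OF A det[folded A_def]] unfolding Ai_def by auto
  have "Ri * A = Ri * (s \<cdot>\<^sub>m 1\<^sub>m k) - Ri * M"
    unfolding A_def by (rule mult_minus_distrib_mat[OF Ri _ M]) simp
  also have "Ri * (s \<cdot>\<^sub>m 1\<^sub>m k) = s \<cdot>\<^sub>m Ri"
    using mult_smult_distrib[OF Ri one_carrier_mat] Ri by simp
  finally have "Ri * A * R = (s \<cdot>\<^sub>m Ri - Ri * M) * R" by simp
  also have "\<dots> = (s \<cdot>\<^sub>m Ri) * R - Ri * M * R"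
    by (rule minus_mult_distrib_mat) (use Ri M R in auto)
  also have "(s \<cdot>\<^sub>m Ri) * R = s \<cdot>\<^sub>m 1\<^sub>m k"
    using mult_smult_assoc_mat[OF Ri R] RiR by simp
  finally have conj: "s \<cdot>\<^sub>m 1\<^sub>m k - Ri * M * R = Ri * A * R" by simp
  have "(Ri * A * R) * (Ri * Ai * R) = Ri * A * (R * Ri) * Ai * R"
    using Ri A R Ai by (simp add: assoc_mult_mat[of _ k k _ k _ k])
  also have "\<dots> = Ri * (A * Ai) * R"
    using Ri A R Ai RRi by (simp add: assoc_mult_mat[of _ k k _ k _ k])
  also have "\<dots> = 1\<^sub>m k"
    using Ai RiR Ri R by simp
  finally have "minv (Ri * A * R) = Ri * Ai * R"
    by (intro minv_eqI[of _ k]) (use Ri A R Ai in auto)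
  then have "(X * R) * minv (s \<cdot>\<^sub>m 1\<^sub>m k - Ri * M * R) * (Ri * Y) = X * (R * Ri) * Ai * (R * Ri) * Y"
    unfolding conj using X R Ri Ai Y
    by (simp add: assoc_mult_mat[of _ a k _ k _ k] assoc_mult_mat[of _ a k _ k _ b]
      assoc_mult_mat[of _ k k _ k _ b] assoc_mult_mat[of _ k k _ k _ k])
  also have "\<dots> = X * Ai * Y"
    using X Ai Y RRi by simp
  finally show ?thesis
    unfolding Ai_def A_def .
qed

lemma det_bordered_mat:
  fixes C :: "'a :: field mat"
  assumes C: "C \<in> carrier_mat q q" and det: "det C \<noteq> 0" and c: "c \<in> carrier_mat q 1"
    and r: "r \<in> carrier_mat 1 q" and d: "d \<in> carrier_mat 1 1"
  shows "det (four_block_mat C c r d) = det C * (r * - (minv C * c) + d) $$ (0, 0)"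
proof -
  note Ci = minv_inverse[OF C det]
  define X where "X = minv C * c"
  have X: "X \<in> carrier_mat q 1"
    unfolding X_def using Ci(1) c by simp
  define U where "U = four_block_mat (1\<^sub>m q) (- X) (0\<^sub>m 1 q) (1\<^sub>m 1)"
  have U: "U \<in> carrier_mat (q + 1) (q + 1)" unfolding U_def by (rule four_block_carrier_mat) auto
  have dU: "det U = 1" unfolding U_def
    by (subst det_four_block_mat_lower_left_zero[of _ q _ 1]) (use X in auto)
  have M: "four_block_mat C c r d \<in> carrier_mat (q + 1) (q + 1)"
    by (rule four_block_carrier_mat[OF C d])
  have "four_block_mat C c r d * U = four_block_mat (C * 1\<^sub>m q + c * 0\<^sub>m 1 q) (C * - X + c * 1\<^sub>m 1)
      (r * 1\<^sub>m q + d * 0\<^sub>m 1 q) (r * - X + d * 1\<^sub>m 1)"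
    unfolding U_def by (rule mult_four_block_mat) (use C c r d X in auto)
  also have "C * - X + c * 1\<^sub>m 1 = 0\<^sub>m q 1"
  proof -
    have "C * X = (C * minv C) * c" unfolding X_def by (rule assoc_mult_mat[OF C Ci(1) c, symmetric])
    then have "C * X = c" using Ci(2) c by simp
    moreover have "C * - X = - (C * X)" by (rule uminus_mult_right_mat) (use C X in auto)
    ultimately show ?thesis using c by simp
  qed
  also have "C * 1\<^sub>m q + c * 0\<^sub>m 1 q = C" using C c by (simp add: right_mult_zero_mat)
  also have "r * 1\<^sub>m q + d * 0\<^sub>m 1 q = r" using r d by (simp add: right_mult_zero_mat)
  finally have MU: "four_block_mat C c r d * U = four_block_mat C (0\<^sub>m q 1) r (r * - X + d * 1\<^sub>m 1)" .
  have "det (four_block_mat C c r d * U) = det C * det (r * - X + d * 1\<^sub>m 1)"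
    unfolding MU by (rule det_four_block_mat_upper_right_zero[OF C refl r]) (use r X d in auto)
  also have "det (r * - X + d * 1\<^sub>m 1) = (r * - X + d) $$ (0, 0)"
    by (subst det_single) (use r X d in auto)
  finally have "det (four_block_mat C c r d) * det U = det C * (r * - X + d) $$ (0, 0)"
    using det_mult[OF M U] by simp
  then show ?thesis using dU unfolding X_def by simp
qed

lemma pick_lessThan_insert:
  assumes "q \<le> i"
  shows "a < q \<Longrightarrow> pick ({..<q} \<union> {i}) a = a" and "pick ({..<q} \<union> {i}) q = i"
proof -
  assume a: "a < q"
  have "card {x \<in> {..<q} \<union> {i}. x < a} = a"
    using a assms by (subst Collect_cong[of _ "\<lambda>x. x < a"]) auto
  then show "pick ({..<q} \<union> {i}) a = a"
    using pick_card_in_set[of a "{..<q} \<union> {i}"] a by simp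
next
  have "card {x \<in> {..<q} \<union> {i}. x < i} = q"
    using assms by (subst Collect_cong[of _ "\<lambda>x. x < q"]) auto
  then show "pick ({..<q} \<union> {i}) q = i"
    using pick_card_in_set[of i "{..<q} \<union> {i}"] by simp
qed

lemma card_lessThan_insert:
  assumes "q \<le> i" "i < r"
  shows "card {a. a < r \<and> a \<in> {..<q} \<union> {i}} = q + 1"
proof -
  have "{a. a < r \<and> a \<in> {..<q} \<union> {i}} = insert i {..<q}"
    using assms by auto
  then show ?thesis
    using assms by simp
qed

lemma submatrix_bordered:
  assumes M: "M \<in> carrier_mat p n" and i: "q \<le> i" "i < p" and j: "q \<le> j" "j < n"
  shows "submatrix M ({..<q} \<union> {i}) ({..<q} \<union> {j}) =
    four_block_mat (sub_mat M 0 0 q q) (sub_mat M 0 j q 1) (sub_mat M i 0 1 q) (sub_mat M i j 1 1)"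
    (is "?S = ?B")
proof (rule eq_matI)
  have rows: "card {a. a < dim_row M \<and> a \<in> {..<q} \<union> {i}} = q + 1"
    and cols: "card {a. a < dim_col M \<and> a \<in> {..<q} \<union> {j}} = q + 1"
    using card_lessThan_insert i j M by auto
  then show "dim_row ?S = dim_row ?B" "dim_col ?S = dim_col ?B"
    by (simp_all add: dim_submatrix)
  fix a b assume "a < dim_row ?B" "b < dim_col ?B"
  then have a: "a < q + 1" and b: "b < q + 1" by auto
  have "pick ({..<q} \<union> {i}) a = (if a < q then a else i)"
    using pick_lessThan_insert[OF i(1)] a by (cases "a < q") (auto simp: less_Suc_eq)
  moreover have "pick ({..<q} \<union> {j}) b = (if b < q then b else j)"
    using pick_lessThan_insert[OF j(1)] b by (cases "b < q") (auto simp: less_Suc_eq)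
  ultimately show "?S $$ (a, b) = ?B $$ (a, b)"
    using a b rows cols by (auto simp: submatrix_index)
qed

section \<open>Kernels of matrices with a nonsingular leading block\<close>

definition leading_kernel_mat :: "'a :: field mat \<Rightarrow> nat \<Rightarrow> 'a mat" where
  "leading_kernel_mat M q = mat (dim_col M) (dim_col M - q) (\<lambda>(i, j).
     if i < q then - (minv (sub_mat M 0 0 q q) * sub_mat M 0 q q (dim_col M - q)) $$ (i, j)
     else if i - q = j then 1 else 0)"

locale leading_block =
  fixes M :: "'a :: field mat" and p n q :: nat
  assumes M: "M \<in> carrier_mat p n" and q_le_p: "q \<le> p" and q_le_n: "q \<le> n"
    and det_leading: "det (sub_mat M 0 0 q q) \<noteq> 0"
begin

abbreviation "C11 \<equiv> sub_mat M 0 0 q q"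
abbreviation "C12 \<equiv> sub_mat M 0 q q (n - q)"
abbreviation "K \<equiv> leading_kernel_mat M q"

lemma n_split: "n = q + (n - q)"
  using q_le_n by simp

lemma minv_C11: "minv C11 \<in> carrier_mat q q" "C11 * minv C11 = 1\<^sub>m q"
  using minv_inverse[OF sub_mat_carrier det_leading] by auto

lemma kernel_vec_eq_zero:
  assumes u: "u \<in> carrier_vec n" and Mu: "M *\<^sub>v u = 0\<^sub>v p" and tail: "vec_last u (n - q) = 0\<^sub>v (n - q)"
  shows "u = 0\<^sub>v n"
proof -
  have u_tail: "u $ (t + q) = 0" if "t < n - q" for t
    using arg_cong[OF tail, of "\<lambda>x. x $ t"] that u q_le_n unfolding vec_last_def
    by (simp add: add.commute)
  have "C11 *\<^sub>v vec_first u q = 0\<^sub>v q"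
  proof (rule eq_vecI)
    fix i assume "i < dim_vec (0\<^sub>v q :: 'a vec)"
    then have i: "i < q" by simp
    have "0 = (M *\<^sub>v u) $ i"
      using Mu i q_le_p by simp
    also have "\<dots> = (\<Sum>t\<in>{0..<q + (n - q)}. M $$ (i, t) * u $ t)"
      using M u i q_le_p n_split by (simp add: scalar_prod_def)
    also have "\<dots> = (\<Sum>t\<in>{0..<q}. M $$ (i, t) * u $ t)"
      using u_tail by (simp add: sum_split_at)
    finally show "(C11 *\<^sub>v vec_first u q) $ i = 0\<^sub>v q $ i"
      using i by (simp add: scalar_prod_def vec_first_def)
  qed simp
  then have head: "vec_first u q = 0\<^sub>v q"
    using det_0_iff_vec_prod_zero_field[OF sub_mat_carrier, of M 0 0 q] det_leading
      vec_first_carrier[of u q] by blast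
  show ?thesis
  proof (rule eq_vecI)
    fix i assume "i < dim_vec (0\<^sub>v n :: 'a vec)"
    then have i: "i < n" by simp
    show "u $ i = 0\<^sub>v n $ i"
    proof (cases "i < q")
      case True
      then show ?thesis
        using arg_cong[OF head, of "\<lambda>x. x $ i"] i by (simp add: vec_first_def)
    next
      case False
      then show ?thesis
        using u_tail[of "i - q"] i by simp
    qed
  qed (use u in simp)
qed

lemma kernel_vec_eqI:
  assumes v: "v \<in> carrier_vec n" and w: "w \<in> carrier_vec n"
    and Mvw: "M *\<^sub>v v = M *\<^sub>v w" and tail: "vec_last v (n - q) = vec_last w (n - q)"
  shows "v = w"
proof -
  have "v - w = 0\<^sub>v n"
  proof (rule kernel_vec_eq_zero)
    show "M *\<^sub>v (v - w) = 0\<^sub>v p"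
      using mult_minus_distrib_mat_vec[OF M v w] Mvw M w by simp
    have "vec_last (v - w) (n - q) = vec_last v (n - q) - vec_last w (n - q)"
      by (rule eq_vecI) (use v w in \<open>auto simp: vec_last_def\<close>)
    then show "vec_last (v - w) (n - q) = 0\<^sub>v (n - q)"
      unfolding tail by simp
  qed (use v w in simp)
  show ?thesis
  proof (rule eq_vecI)
    fix i assume "i < dim_vec w"
    then show "v $ i = w $ i"
      using arg_cong[OF \<open>v - w = 0\<^sub>v n\<close>, of "\<lambda>x. x $ i"] v w by simp
  qed (use v w in simp)
qed

lemma leading_kernel_mat_carrier: "K \<in> carrier_mat n (n - q)"
  unfolding leading_kernel_mat_def using M by simp

lemma leading_kernel_mat_blocks:
  "sub_mat K 0 0 q (n - q) = - (minv C11 * C12)" "sub_mat K q 0 (n - q) (n - q) = 1\<^sub>m (n - q)"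
  by (rule eq_matI; use M minv_C11(1) q_le_n in \<open>auto simp: leading_kernel_mat_def\<close>)+

lemma vec_last_leading_kernel_mat: "c \<in> carrier_vec (n - q) \<Longrightarrow> vec_last (K *\<^sub>v c) (n - q) = c"
  using vec_last_mult_mat_vec[where X = K and q = q and k = "n - q"] leading_kernel_mat_carrier leading_kernel_mat_blocks(2) n_split
  by simp

lemma leading_rows_mult_leading_kernel_mat: "sub_mat M 0 0 q n * K = 0\<^sub>m q (n - q)"
proof -
  have "C11 * (minv C11 * C12) = (C11 * minv C11) * C12"
    by (rule assoc_mult_mat[symmetric]) (use minv_C11 in auto)
  then have C11_K: "C11 * - (minv C11 * C12) = - C12"
    using minv_C11 by simp
  have "sub_mat M 0 0 q n * K = sub_mat (sub_mat M 0 0 q n) 0 0 q q * sub_mat K 0 0 q (n - q)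
      + sub_mat (sub_mat M 0 0 q n) 0 q q (n - q) * sub_mat K q 0 (n - q) (n - q)"
    by (rule mult_split_inner) (use leading_kernel_mat_carrier q_le_n in auto)
  also have "\<dots> = - C12 + C12"
    using leading_kernel_mat_blocks q_le_n C11_K by simp
  finally show ?thesis
    by simp
qed

lemma lower_rows_mult_leading_kernel_mat:
  assumes rank: "vec_space.rank p M = q" and i: "q \<le> i" "i < p" and j: "j < n - q"
  shows "(M * K) $$ (i, j) = 0"
proof (rule ccontr)
  assume nz: "(M * K) $$ (i, j) \<noteq> 0"
  define c where "c = sub_mat M 0 (q + j) q 1"
  define r where "r = sub_mat M i 0 1 q"
  define d where "d = sub_mat M i (q + j) 1 1"
  have Cc: "minv C11 * c \<in> carrier_mat q 1"
    using minv_C11(1) unfolding c_def by simp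
  have Kc: "(minv C11 * c) $$ (t, 0) = (minv C11 * C12) $$ (t, j)" if "t < q" for t
    using that j minv_C11(1) unfolding c_def by (auto simp: scalar_prod_def add.commute intro!: sum.cong)
  have K_lower: "(\<Sum>t\<in>{0..<n - q}. M $$ (i, t + q) * K $$ (t + q, j)) = d $$ (0, 0)"
  proof -
    have "(\<Sum>t\<in>{0..<n - q}. M $$ (i, t + q) * K $$ (t + q, j)) =
        (\<Sum>t\<in>{0..<n - q}. if t = j then M $$ (i, t + q) else 0)"
      by (rule sum.cong) (use j M in \<open>auto simp: leading_kernel_mat_def\<close>)
    then show ?thesis
      using j unfolding d_def by (simp add: add.commute)
  qed
  have "(M * K) $$ (i, j) = (\<Sum>t\<in>{0..<q + (n - q)}. M $$ (i, t) * K $$ (t, j))"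
    using i j M leading_kernel_mat_carrier q_le_n by (simp add: scalar_prod_def)
  also have "\<dots> = (\<Sum>t\<in>{0..<q}. M $$ (i, t) * K $$ (t, j)) + d $$ (0, 0)"
    unfolding sum_split_at K_lower ..
  also have "(\<Sum>t\<in>{0..<q}. M $$ (i, t) * K $$ (t, j)) = (\<Sum>t\<in>{0..<q}. r $$ (0, t) * (- (minv C11 * c)) $$ (t, 0))"
    using j Kc Cc minv_C11(1) M unfolding r_def by (auto simp: leading_kernel_mat_def intro!: sum.cong)
  finally have schur: "(M * K) $$ (i, j) = (r * - (minv C11 * c) + d) $$ (0, 0)"
    using minv_C11(1) unfolding r_def c_def d_def by (simp add: scalar_prod_def sum_negf)
  have "submatrix M ({..<q} \<union> {i}) ({..<q} \<union> {q + j}) = four_block_mat C11 c r d"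
    unfolding c_def r_def d_def using submatrix_bordered[OF M i, of "q + j"] j by simp
  then have "det (submatrix M ({..<q} \<union> {i}) ({..<q} \<union> {q + j})) = det C11 * (r * - (minv C11 * c) + d) $$ (0, 0)"
    using det_bordered_mat[OF sub_mat_carrier det_leading] unfolding c_def r_def d_def by simp
  then have "det (submatrix M ({..<q} \<union> {i}) ({..<q} \<union> {q + j})) \<noteq> 0"
    using schur nz det_leading by simp
  then have "card {a. a < n \<and> a \<in> {..<q} \<union> {q + j}} \<le> q"
    using vec_space.rank_gt_minor[OF M] rank by metis
  then show False
    using card_lessThan_insert[of q "q + j" n] j by (simp add: less_diff_conv add.commute)
qed

lemma mult_leading_kernel_mat:
  assumes rank: "vec_space.rank p M = q"
  shows "M * K = 0\<^sub>m p (n - q)"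
proof (rule eq_matI)
  fix i j assume "i < dim_row (0\<^sub>m p (n - q) :: 'a mat)" "j < dim_col (0\<^sub>m p (n - q) :: 'a mat)"
  then have i: "i < p" and j: "j < n - q" by auto
  show "(M * K) $$ (i, j) = 0\<^sub>m p (n - q) $$ (i, j)"
  proof (cases "i < q")
    case True
    have "(M * K) $$ (i, j) = (sub_mat M 0 0 q n * K) $$ (i, j)"
      using True i j M leading_kernel_mat_carrier by (auto simp: scalar_prod_def intro!: sum.cong)
    then show ?thesis
      using leading_rows_mult_leading_kernel_mat True i j by simp
  next
    case False
    then show ?thesis
      using lower_rows_mult_leading_kernel_mat[OF rank _ i j] i j by simp
  qed
qed (use M leading_kernel_mat_carrier in auto)

lemma mat_kernel_leading_kernel_mat:
  assumes rank: "vec_space.rank p M = q"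
  shows "mat_kernel M = {K *\<^sub>v c | c. c \<in> carrier_vec (n - q)}"
proof -
  have Kc: "K *\<^sub>v c \<in> carrier_vec n" if "c \<in> carrier_vec (n - q)" for c
    using leading_kernel_mat_carrier that by simp
  have MK: "M *\<^sub>v (K *\<^sub>v c) = 0\<^sub>v p" if "c \<in> carrier_vec (n - q)" for c
    using assoc_mult_mat_vec[OF M leading_kernel_mat_carrier that] mult_leading_kernel_mat[OF rank] that
    by simp
  show ?thesis
  proof (intro equalityI subsetI)
    fix v assume "v \<in> mat_kernel M"
    then have v: "v \<in> carrier_vec n" and Mv: "M *\<^sub>v v = 0\<^sub>v p"
      using mat_kernelD[OF M] by auto
    define c where "c = vec_last v (n - q)"
    have c: "c \<in> carrier_vec (n - q)"
      unfolding c_def by simp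
    have "v = K *\<^sub>v c"
    proof (rule kernel_vec_eqI[OF v Kc[OF c]])
      show "M *\<^sub>v v = M *\<^sub>v (K *\<^sub>v c)"
        using Mv MK[OF c] by simp
      show "vec_last v (n - q) = vec_last (K *\<^sub>v c) (n - q)"
        using vec_last_leading_kernel_mat[OF c] unfolding c_def by simp
    qed
    then show "v \<in> {K *\<^sub>v c | c. c \<in> carrier_vec (n - q)}"
      using c by blast
  next
    fix v assume "v \<in> {K *\<^sub>v c | c. c \<in> carrier_vec (n - q)}"
    then obtain c where c: "c \<in> carrier_vec (n - q)" and v: "v = K *\<^sub>v c"
      by blast
    show "v \<in> mat_kernel M"
      unfolding v by (rule mat_kernelI[OF M Kc[OF c] MK[OF c]])
  qed
qed

lemma leading_kernel_mat_inj:
  assumes "c \<in> carrier_vec (n - q)" "K *\<^sub>v c = 0\<^sub>v n"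
  shows "c = 0\<^sub>v (n - q)"
proof -
  have "c = vec_last (0\<^sub>v n) (n - q)"
    using vec_last_leading_kernel_mat[OF assms(1)] assms(2) by simp
  then show ?thesis
    using q_le_n by simp
qed

lemma det_tail_block_nonzero:
  assumes N: "N \<in> carrier_mat n (n - q)" and MN: "M * N = 0\<^sub>m p (n - q)"
    and inj: "\<And>c. c \<in> carrier_vec (n - q) \<Longrightarrow> N *\<^sub>v c = 0\<^sub>v n \<Longrightarrow> c = 0\<^sub>v (n - q)"
  shows "det (sub_mat N q 0 (n - q) (n - q)) \<noteq> 0"
proof -
  have "c = 0\<^sub>v (n - q)" if c: "c \<in> carrier_vec (n - q)" and N2c: "sub_mat N q 0 (n - q) (n - q) *\<^sub>v c = 0\<^sub>v (n - q)" for c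
  proof (rule inj[OF c], rule kernel_vec_eqI)
    show "M *\<^sub>v (N *\<^sub>v c) = M *\<^sub>v 0\<^sub>v n"
      using assoc_mult_mat_vec[OF M N c] MN c M by simp
    show "vec_last (N *\<^sub>v c) (n - q) = vec_last (0\<^sub>v n) (n - q)"
      using vec_last_mult_mat_vec[where X = N and q = q and k = "n - q"] N c N2c q_le_n
      by simp
  qed (use N c in auto)
  then show ?thesis
    using det_0_iff_vec_prod_zero_field[OF sub_mat_carrier] by blast
qed

end

section \<open>Dynamical structure functions under block-diagonal changes of coordinates\<close>

lemma cmat_carrier[simp]: "A \<in> carrier_mat a b \<Longrightarrow> cmat A \<in> carrier_mat a b"
  by (simp add: cmat_def)

lemma cmat_mult: "A \<in> carrier_mat a b \<Longrightarrow> B \<in> carrier_mat b c \<Longrightarrow> cmat (A * B) = cmat A * cmat B"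
  unfolding cmat_def by (rule of_real_hom.mat_hom_mult)

lemma cmat_one[simp]: "cmat (1\<^sub>m n) = 1\<^sub>m n"
  unfolding cmat_def by (rule eq_matI) auto

definition block_diag_id :: "nat \<Rightarrow> 'a :: semiring_1 mat \<Rightarrow> 'a mat" where
  "block_diag_id q R = four_block_mat (1\<^sub>m q) (0\<^sub>m q (dim_col R)) (0\<^sub>m (dim_row R) q) R"

lemma block_diag_id_carrier: "R \<in> carrier_mat k k \<Longrightarrow> block_diag_id q R \<in> carrier_mat (q + k) (q + k)"
  unfolding block_diag_id_def by auto

lemma block_diag_id_mult:
  assumes "A \<in> carrier_mat k k" "B \<in> carrier_mat k k"
  shows "block_diag_id q A * block_diag_id q B = block_diag_id q (A * B)"
  unfolding block_diag_id_def using assms by (subst mult_four_block_mat) auto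

lemma block_diag_id_one: "block_diag_id q (1\<^sub>m k) = 1\<^sub>m (q + k)"
  unfolding block_diag_id_def by simp

lemma block_diag_id_mult_upper_triangular:
  assumes "Ri \<in> carrier_mat k k" "A \<in> carrier_mat q q" "B \<in> carrier_mat q k" "E \<in> carrier_mat k k"
  shows "block_diag_id q Ri * four_block_mat A B (0\<^sub>m k q) E = four_block_mat A B (0\<^sub>m k q) (Ri * E)"
  unfolding block_diag_id_def using assms by (subst mult_four_block_mat) auto

lemma block_diag_id_minv:
  assumes R: "(R :: 'a :: field mat) \<in> carrier_mat k k" "det R \<noteq> 0"
  shows "minv (block_diag_id q (minv R)) = block_diag_id q R" and "det (block_diag_id q (minv R)) \<noteq> 0"
proof -
  note R_inv = minv_inverse[OF R]
  have D: "block_diag_id q (minv R) \<in> carrier_mat (q + k) (q + k)" "block_diag_id q R \<in> carrier_mat (q + k) (q + k)"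
    using block_diag_id_carrier R_inv(1) R(1) by auto
  have "block_diag_id q (minv R) * block_diag_id q R = 1\<^sub>m (q + k)"
    using block_diag_id_mult[OF R_inv(1) R(1)] R_inv(3) block_diag_id_one by simp
  then show "minv (block_diag_id q (minv R)) = block_diag_id q R" and "det (block_diag_id q (minv R)) \<noteq> 0"
    using minv_eqI[OF D] det_mult[OF D] by auto
qed

lemma sub_mat_block_diag_id_mult:
  fixes Ri :: "'a :: semiring_1 mat"
  assumes Ri: "Ri \<in> carrier_mat k k" and Y: "Y \<in> carrier_mat (q + k) m"
  shows "sub_mat (block_diag_id q Ri * Y) 0 0 q m = sub_mat Y 0 0 q m"
    and "sub_mat (block_diag_id q Ri * Y) q 0 k m = Ri * sub_mat Y q 0 k m"
proof -
  define F where "F = four_block_mat (sub_mat Y 0 0 q m) (sub_mat Y 0 m q 0) (sub_mat Y q 0 k m) (sub_mat Y q m k 0)"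
  have "F = Y"
    unfolding F_def using four_block_mat_sub_mat[of Y q k m 0] Y by simp
  moreover have "block_diag_id q Ri * F = four_block_mat (sub_mat Y 0 0 q m) (sub_mat Y 0 m q 0)
      (Ri * sub_mat Y q 0 k m) (Ri * sub_mat Y q m k 0)"
    unfolding block_diag_id_def F_def using Ri by (subst mult_four_block_mat) auto
  ultimately show "sub_mat (block_diag_id q Ri * Y) 0 0 q m = sub_mat Y 0 0 q m"
    and "sub_mat (block_diag_id q Ri * Y) q 0 k m = Ri * sub_mat Y q 0 k m"
    using sub_mat_four_block_mat[of "sub_mat Y 0 0 q m" q m "sub_mat Y 0 m q 0" 0 "Ri * sub_mat Y q 0 k m" k]
      Ri by auto
qed

lemma sub_mat_block_diag_id_conj:
  fixes R Ri :: "'a :: semiring_1 mat"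
  assumes R: "R \<in> carrier_mat k k" and Ri: "Ri \<in> carrier_mat k k" and X: "X \<in> carrier_mat (q + k) (q + k)"
  defines "Y \<equiv> block_diag_id q Ri * X * block_diag_id q R"
  shows "sub_mat Y 0 0 q q = sub_mat X 0 0 q q" and "sub_mat Y 0 q q k = sub_mat X 0 q q k * R"
    and "sub_mat Y q 0 k q = Ri * sub_mat X q 0 k q" and "sub_mat Y q q k k = Ri * sub_mat X q q k k * R"
proof -
  define X11 X12 X21 X22 where "X11 = sub_mat X 0 0 q q" and "X12 = sub_mat X 0 q q k"
    and "X21 = sub_mat X q 0 k q" and "X22 = sub_mat X q q k k"
  have "four_block_mat X11 X12 X21 X22 = X"
    unfolding X11_def X12_def X21_def X22_def using four_block_mat_sub_mat[OF X] .
  moreover have "block_diag_id q Ri * four_block_mat X11 X12 X21 X22 * block_diag_id q R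
      = four_block_mat X11 (X12 * R) (Ri * X21) (Ri * X22 * R)"
    unfolding block_diag_id_def X11_def X12_def X21_def X22_def using R Ri
    by (subst mult_four_block_mat, auto)+
  ultimately have "Y = four_block_mat X11 (X12 * R) (Ri * X21) (Ri * X22 * R)"
    unfolding Y_def by simp
  then show "sub_mat Y 0 0 q q = sub_mat X 0 0 q q" and "sub_mat Y 0 q q k = sub_mat X 0 q q k * R"
    and "sub_mat Y q 0 k q = Ri * sub_mat X q 0 k q" and "sub_mat Y q q k k = Ri * sub_mat X q q k k * R"
    using sub_mat_four_block_mat[of X11 q q "X12 * R" k "Ri * X21" k "Ri * X22 * R"] R Ri
    unfolding X11_def X12_def X21_def X22_def by auto
qed

text \<open>\<open>W(s)\<close> and \<open>V(s)\<close> for a system \<open>(A, B)\<close> whose state splits as \<open>(z\<^sub>1, z\<^sub>2)\<close> with \<open>q\<close>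
  components in \<open>z\<^sub>1\<close>, obtained by eliminating \<open>z\<^sub>2\<close>.\<close>

definition dsf_W :: "nat \<Rightarrow> nat \<Rightarrow> real mat \<Rightarrow> complex \<Rightarrow> complex mat" where
  "dsf_W q k A s = cmat (sub_mat A 0 0 q q)
     + cmat (sub_mat A 0 q q k) * minv (s \<cdot>\<^sub>m 1\<^sub>m k - cmat (sub_mat A q q k k)) * cmat (sub_mat A q 0 k q)"

definition dsf_V :: "nat \<Rightarrow> nat \<Rightarrow> nat \<Rightarrow> real mat \<Rightarrow> real mat \<Rightarrow> complex \<Rightarrow> complex mat" where
  "dsf_V q k m A B s = cmat (sub_mat B 0 0 q m)
     + cmat (sub_mat A 0 q q k) * minv (s \<cdot>\<^sub>m 1\<^sub>m k - cmat (sub_mat A q q k k)) * cmat (sub_mat B q 0 k m)"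

lemma dsf_WV_block_diag_id_conj:
  assumes R: "R \<in> carrier_mat k k" and Ri: "Ri \<in> carrier_mat k k"
    and RRi: "R * Ri = 1\<^sub>m k" and RiR: "Ri * R = 1\<^sub>m k"
    and A: "A \<in> carrier_mat (q + k) (q + k)" and B: "B \<in> carrier_mat (q + k) m"
    and det: "det (s \<cdot>\<^sub>m 1\<^sub>m k - cmat (sub_mat A q q k k)) \<noteq> 0"
  shows "dsf_W q k (block_diag_id q Ri * A * block_diag_id q R) s = dsf_W q k A s"
    and "dsf_V q k m (block_diag_id q Ri * A * block_diag_id q R) (block_diag_id q Ri * B) s = dsf_V q k m A B s"
proof -
  have cR: "cmat R \<in> carrier_mat k k" "cmat Ri \<in> carrier_mat k k"
    "cmat R * cmat Ri = 1\<^sub>m k" "cmat Ri * cmat R = 1\<^sub>m k"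
    using R Ri RRi RiR cmat_mult[OF R Ri] cmat_mult[OF Ri R] by auto
  have A22: "cmat (Ri * sub_mat A q q k k * R) = cmat Ri * cmat (sub_mat A q q k k) * cmat R"
    using cmat_mult[OF mult_carrier_mat[OF Ri sub_mat_carrier] R] cmat_mult[OF Ri sub_mat_carrier] by simp
  note similar = resolvent_similarity[OF cR cmat_carrier[OF sub_mat_carrier] det]
  note conj = sub_mat_block_diag_id_conj[OF R Ri A]
  show "dsf_W q k (block_diag_id q Ri * A * block_diag_id q R) s = dsf_W q k A s"
    unfolding dsf_W_def conj A22 cmat_mult[OF sub_mat_carrier R] cmat_mult[OF Ri sub_mat_carrier]
    using similar[of "cmat (sub_mat A 0 q q k)" q "cmat (sub_mat A q 0 k q)" q] by simp
  show "dsf_V q k m (block_diag_id q Ri * A * block_diag_id q R) (block_diag_id q Ri * B) s = dsf_V q k m A B s"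
    unfolding dsf_V_def conj A22 sub_mat_block_diag_id_mult[OF Ri B] cmat_mult[OF sub_mat_carrier R]
      cmat_mult[OF Ri sub_mat_carrier]
    using similar[of "cmat (sub_mat A 0 q q k)" q "cmat (sub_mat B q 0 k m)" m] by simp
qed

section \<open>Uniqueness of the signal structure\<close>

definition state_transform :: "gss \<Rightarrow> nat \<Rightarrow> real mat \<Rightarrow> real mat" where
  "state_transform S n N = four_block_mat (gss_C11 S) (sub_mat (gss_Co S) 0 (gss_p1 S) (gss_p1 S) (n - gss_p1 S))
     (0\<^sub>m (n - gss_p1 S) (gss_p1 S)) (minv (sub_mat N (gss_p1 S) 0 (n - gss_p1 S) (n - gss_p1 S)))"

definition transformed_A :: "gss \<Rightarrow> nat \<Rightarrow> real mat \<Rightarrow> real mat" where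
  "transformed_A S n N = state_transform S n N * gss_Ao S * minv (state_transform S n N)"

definition transformed_B :: "gss \<Rightarrow> nat \<Rightarrow> real mat \<Rightarrow> real mat" where
  "transformed_B S n N = state_transform S n N * gss_Bo S"

definition diag_part :: "nat \<Rightarrow> complex mat \<Rightarrow> complex mat" where
  "diag_part q W = mat q q (\<lambda>(i, j). if i = j then W $$ (i, j) else 0)"

definition dsf_Q :: "nat \<Rightarrow> complex mat \<Rightarrow> complex \<Rightarrow> complex mat" where
  "dsf_Q q W s = minv (s \<cdot>\<^sub>m 1\<^sub>m q - diag_part q W) * (W - diag_part q W)"

definition dsf_PD :: "nat \<Rightarrow> complex mat \<Rightarrow> complex mat \<Rightarrow> real mat \<Rightarrow> complex \<Rightarrow> complex mat" where
  "dsf_PD q W V D1 s = minv (s \<cdot>\<^sub>m 1\<^sub>m q - diag_part q W) * V + (1\<^sub>m q - dsf_Q q W s) * cmat D1"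

lemma dsf_data_eq:
  "dsf_data S n m p N = (let p1 = gss_p1 S; k = n - p1;
     W = dsf_W p1 k (transformed_A S n N); V = dsf_V p1 k m (transformed_A S n N) (transformed_B S n N)
   in (\<lambda>s. dsf_Q p1 (W s) s, \<lambda>s. dsf_PD p1 (W s) (V s) (sub_mat (gss_Do S) 0 0 p1 m) s,
       sub_mat (gss_Co S) p1 0 (p - p1) p1 * minv (gss_C11 S), sub_mat (gss_Do S) p1 0 (p - p1) m))"
  unfolding dsf_data_def Let_def dsf_W_def dsf_V_def dsf_Q_def dsf_PD_def diag_part_def
    transformed_A_def transformed_B_def state_transform_def gss_C11_def ..

lemma sig_label_eqI:
  assumes "dsf_W (gss_p1 S) (n - gss_p1 S) (transformed_A S n N) s = dsf_W (gss_p1 S) (n - gss_p1 S) (transformed_A S n N') s"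
    and "dsf_V (gss_p1 S) (n - gss_p1 S) m (transformed_A S n N) (transformed_B S n N) s
       = dsf_V (gss_p1 S) (n - gss_p1 S) m (transformed_A S n N') (transformed_B S n N') s"
  shows "sig_label S n m p N a b s = sig_label S n m p N' a b s"
  using assms by (cases a; cases b) (simp_all add: dsf_data_eq Let_def)

lemma tf_nonzero_cong:
  assumes "finite {s. f s \<noteq> g s}"
  shows "tf_nonzero f = tf_nonzero g"
proof -
  have "{s. f s \<noteq> 0} \<subseteq> {s. g s \<noteq> 0} \<union> {s. f s \<noteq> g s}" "{s. g s \<noteq> 0} \<subseteq> {s. f s \<noteq> 0} \<union> {s. f s \<noteq> g s}"
    by auto
  then show ?thesis
    unfolding tf_nonzero_def using assms by (meson finite_Un finite_subset)
qed

locale dsf_setting =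
  fixes S :: gss and n m l p :: nat
  assumes wf: "gss_wf S n m l p" and C11_invertible: "invertible_mat (gss_C11 S)"
begin

abbreviation "Co \<equiv> gss_Co S"
abbreviation "p1 \<equiv> gss_p1 S"
abbreviation "k \<equiv> n - gss_p1 S"

lemma Co_carrier: "Co \<in> carrier_mat p n"
  and Ao_carrier: "gss_Ao S \<in> carrier_mat n n"
  and Bo_carrier: "gss_Bo S \<in> carrier_mat n m"
  using wf unfolding gss_wf_def gss_Co_def gss_Ao_def gss_Bo_def carrier_mat_def by auto

lemma p1_le: "p1 \<le> p" "p1 \<le> n"
  using rank_le_nr[OF Co_carrier] vec_space.rank_le_nc[OF Co_carrier] Co_carrier
  unfolding gss_p1_def by auto

lemma det_C11: "det (gss_C11 S) \<noteq> 0"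
  using invertible_mat_det_nonzero[OF sub_mat_carrier C11_invertible[unfolded gss_C11_def]]
  unfolding gss_C11_def .

sublocale leading_block Co p n p1
  using Co_carrier p1_le det_C11 by unfold_locales (auto simp: gss_C11_def)

lemma rank_Co: "vec_space.rank p Co = p1"
  unfolding gss_p1_def using Co_carrier by simp

lemma kernel_basis_leading_kernel_mat: "kernel_basis S n (leading_kernel_mat Co p1)"
  unfolding kernel_basis_def
  using leading_kernel_mat_carrier mat_kernel_leading_kernel_mat[OF rank_Co] leading_kernel_mat_inj
  by blast

context
  fixes N assumes N: "kernel_basis S n N"
begin

lemma kernel_basis_carrier: "N \<in> carrier_mat n k"
  using N unfolding kernel_basis_def by blast

lemma Co_mult_kernel_basis: "Co * N = 0\<^sub>m p k"
proof (rule mat_eq_if_mult_vec_eq)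
  fix c :: "real vec" assume c: "c \<in> carrier_vec k"
  then have "N *\<^sub>v c \<in> mat_kernel Co"
    using N unfolding kernel_basis_def by blast
  then show "(Co * N) *\<^sub>v c = 0\<^sub>m p k *\<^sub>v c"
    using assoc_mult_mat_vec[OF Co_carrier kernel_basis_carrier c] mat_kernelD[OF Co_carrier] c by simp
qed (use Co_carrier kernel_basis_carrier in auto)

lemma det_kernel_basis_tail: "det (sub_mat N p1 0 k k) \<noteq> 0"
  using det_tail_block_nonzero[OF kernel_basis_carrier Co_mult_kernel_basis] N
  unfolding kernel_basis_def by blast

lemma state_transform_carrier: "state_transform S n N \<in> carrier_mat n n"
  using minv_inverse(1)[OF sub_mat_carrier det_kernel_basis_tail] n_split
  unfolding state_transform_def gss_C11_def by (metis four_block_carrier_mat sub_mat_carrier zero_carrier_mat)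

lemma det_state_transform: "det (state_transform S n N) \<noteq> 0"
  using det_four_block_mat_lower_left_zero[OF _ _ refl, of "gss_C11 S" p1] det_C11
    det_minv_nonzero[OF sub_mat_carrier det_kernel_basis_tail] minv_inverse(1)[OF sub_mat_carrier det_kernel_basis_tail]
  unfolding state_transform_def by (simp add: gss_C11_def)

end

lemma state_transform_change_of_kernel_basis:
  assumes N: "kernel_basis S n N" and N': "kernel_basis S n N'"
  obtains R where "R \<in> carrier_mat k k" "det R \<noteq> 0"
    "state_transform S n N' = block_diag_id p1 (minv R) * state_transform S n N"
proof -
  define N2 N2' where "N2 = sub_mat N p1 0 k k" and "N2' = sub_mat N' p1 0 k k"
  have N2: "N2 \<in> carrier_mat k k" "det N2 \<noteq> 0" and N2': "N2' \<in> carrier_mat k k" "det N2' \<noteq> 0"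
    unfolding N2_def N2'_def using det_kernel_basis_tail[OF N] det_kernel_basis_tail[OF N'] by auto
  note N2_inv = minv_inverse[OF N2]
  define R where "R = minv N2 * N2'"
  have R: "R \<in> carrier_mat k k" "det R \<noteq> 0"
    unfolding R_def using N2_inv(1) N2' det_mult[OF N2_inv(1) N2'(1)] det_minv_nonzero[OF N2] by auto
  have "N2 * R = (N2 * minv N2) * N2'"
    unfolding R_def by (rule assoc_mult_mat[symmetric]) (use N2 N2_inv N2' in auto)
  then have "minv N2' = minv R * minv N2"
    using minv_mult[OF N2 R] N2_inv N2' by simp
  then have "state_transform S n N' = block_diag_id p1 (minv R) * state_transform S n N"
    unfolding state_transform_def N2_def[symmetric] N2'_def[symmetric]
    using block_diag_id_mult_upper_triangular[OF minv_inverse(1)[OF R] sub_mat_carrier sub_mat_carrier N2_inv(1)]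
    unfolding gss_C11_def by simp
  then show ?thesis
    using that R by blast
qed

lemma transformed_change_of_kernel_basis:
  assumes N: "kernel_basis S n N" and N': "kernel_basis S n N'"
  obtains R where "R \<in> carrier_mat k k" "det R \<noteq> 0"
    "transformed_A S n N' = block_diag_id p1 (minv R) * transformed_A S n N * block_diag_id p1 R"
    "transformed_B S n N' = block_diag_id p1 (minv R) * transformed_B S n N"
proof -
  obtain R where R: "R \<in> carrier_mat k k" "det R \<noteq> 0"
    and T': "state_transform S n N' = block_diag_id p1 (minv R) * state_transform S n N"
    using state_transform_change_of_kernel_basis[OF N N'] .
  let ?T = "state_transform S n N" and ?D = "block_diag_id p1 (minv R)"
  have D: "?D \<in> carrier_mat n n" "block_diag_id p1 R \<in> carrier_mat n n"
    using block_diag_id_carrier[OF minv_inverse(1)[OF R], of p1] block_diag_id_carrier[OF R(1), of p1] p1_le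
    by auto
  note D_inv = block_diag_id_minv[OF R, of p1]
  note T = state_transform_carrier[OF N] det_state_transform[OF N]
  have "transformed_A S n N' = ?D * ?T * gss_Ao S * (minv ?T * block_diag_id p1 R)"
    unfolding transformed_A_def T' minv_mult[OF D(1) D_inv(2) T] D_inv(1) ..
  also have "\<dots> = ?D * transformed_A S n N * block_diag_id p1 R"
    unfolding transformed_A_def using D T Ao_carrier minv_inverse(1)[OF T]
    by (simp add: assoc_mult_mat[of _ n n _ n _ n])
  finally have "transformed_A S n N' = ?D * transformed_A S n N * block_diag_id p1 R" .
  moreover have "transformed_B S n N' = ?D * transformed_B S n N"
    unfolding transformed_B_def T' using D T Bo_carrier by (simp add: assoc_mult_mat[of _ n n _ n _ m])
  ultimately show ?thesis
    using that R by blast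
qed

lemma transformed_carrier:
  assumes "kernel_basis S n N"
  shows "transformed_A S n N \<in> carrier_mat (p1 + k) (p1 + k)" "transformed_B S n N \<in> carrier_mat (p1 + k) m"
  using state_transform_carrier[OF assms] minv_inverse(1)[OF state_transform_carrier[OF assms] det_state_transform[OF assms]]
    Ao_carrier Bo_carrier p1_le
  unfolding transformed_A_def transformed_B_def by auto

lemma signal_structures_agree:
  assumes N: "kernel_basis S n N" and N': "kernel_basis S n N'"
  shows "lgraph_eq (labelled_graph (sig_label S n m p N)) (labelled_graph (sig_label S n m p N'))"
proof -
  obtain R where R: "R \<in> carrier_mat k k" "det R \<noteq> 0"
    and AB: "transformed_A S n N' = block_diag_id p1 (minv R) * transformed_A S n N * block_diag_id p1 R"
      "transformed_B S n N' = block_diag_id p1 (minv R) * transformed_B S n N"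
    using transformed_change_of_kernel_basis[OF N N'] .
  note R_inv = minv_inverse[OF R]
  let ?poles = "{s. det (s \<cdot>\<^sub>m 1\<^sub>m k - cmat (sub_mat (transformed_A S n N) p1 p1 k k)) = 0}"
  have poles: "finite ?poles"
    by (rule finite_char_roots) simp
  have agree: "sig_label S n m p N a b s = sig_label S n m p N' a b s" if "s \<notin> ?poles" for a b s
    using that dsf_WV_block_diag_id_conj[OF R(1) R_inv(1,2,3) transformed_carrier[OF N]]
    by (intro sig_label_eqI) (simp_all add: AB)
  have "finite {s. sig_label S n m p N a b s \<noteq> sig_label S n m p N' a b s}" for a b
    using agree by (intro finite_subset[OF _ poles]) blast
  then show ?thesis
    unfolding lgraph_eq_def labelled_graph_def tf_eq_def using tf_nonzero_cong by auto
qed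

end

theorem theorem1:
  fixes S :: gss and n m l p :: nat
  assumes wf: "gss_wf S n m l p"
    and inv: "invertible_mat (1\<^sub>m l - gAt S)"
    and C11: "invertible_mat (gss_C11 S)"
  shows "(\<exists>!G. is_subsystem_structure S n m l p G)
    \<and> (\<exists>G. is_signal_structure S n m p G)
    \<and> (\<forall>G1 G2. is_signal_structure S n m p G1 \<longrightarrow> is_signal_structure S n m p G2 \<longrightarrow> lgraph_eq G1 G2)
    \<and> (\<exists>!G. is_sparsity_structure S n m p G)"
proof -
  interpret dsf_setting S n m l p
    using wf C11 by unfold_locales
  have "\<exists>G. is_signal_structure S n m p G"
    unfolding is_signal_structure_def using kernel_basis_leading_kernel_mat by blast
  moreover have "lgraph_eq G1 G2"
    if "is_signal_structure S n m p G1" "is_signal_structure S n m p G2" for G1 G2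
    using that signal_structures_agree unfolding is_signal_structure_def by blast
  ultimately show ?thesis
    using subsystem_structure_unique by (auto simp: is_sparsity_structure_def)
qed

end
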